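(* In the setting of the context, on the event $\mathcal E_0=\{\theta^*\in\mathcal B_k\cap\mathcal C_k\text{ for all }k\ge1\}$, for every episode $k$, all states $s$, actions $a$ and stages $h=1,\dots,H+1$, \[ Q^{\pi^*}_h(s,a)\le\widehat Q_{k,h}(s,a),\qquad V^{\pi^*}_h(s)\le\widehat V_{k,h}(s). \]
   Context: Online MDP $(\mathcal S,\mathcal A,P,r,H,s_1)$ with known reward $r:\mathcal S\times\mathcal A\to[0,1]$ and $P(s'\mid s,a)=\langle\theta^*,\phi(s'\mid s,a)\rangle$ for a known feature map $\phi:\mathcal S\times\mathcal A\times\mathcal S\to\mathbb R^d$; $\phi_j(\cdot\mid s,a)\in\mathbb R^{|\mathcal S|}$ denotes $(\phi_j(s'\mid s,a))_{s'}$. $\pi^*$ is an optimal policy, $Q^{\pi^*}_h(s,a)=\mathbb E_{\pi^*}[\sum_{i=h}^Hr(s_i,a_i)\mid s_h=s,a_h=a]$, $V^{\pi^*}_h(s)=\max_aQ^{\pi^*}_h(s,a)$, $Q^{\pi^*}_{H+1}\equiv0$. In episode $k$ the algorithm O-O UCRL-VTR has two sets $\mathcal B_k,\mathcal C_k\subset\mathbb R^d$ (ellipsoidal confidence sets around an offline–online and an online-only ridge estimator) and computes $\widehat Q_{k,H+1}\equiv0$ and, for $h=H,\dots,1$, $\widehat Q_{k,h}(s,a)=r(s,a)+\max_{\theta\in\mathcal B_k\cap\mathcal C_k}\sum_{j=1}^d\theta_j\phi_j(\cdot\mid s,a)^\top\widehat V_{k,h+1}$, $\widehat V_{k,h}(s)=\max_a\widehat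 Q_{k,h}(s,a)$ (with $\widehat V_{k,H+1}=0$). *)

theory Defs
  imports "HOL-Analysis.Analysis"
begin

definition trans_prob :: "real^'d \<Rightarrow> ('s \<Rightarrow> 'act \<Rightarrow> 's \<Rightarrow> real^'d) \<Rightarrow> 's \<Rightarrow> 'act \<Rightarrow> 's \<Rightarrow> real" where
  "trans_prob \<theta> \<phi> s a s' = \<theta> \<bullet> \<phi> s a s'"

text \<open>Policy evaluation of a deterministic (nonstationary) Markov policy pi (pi h s = action at stage h).
  Qpi_aux ... h n s a is Q^pi_h(s,a) when n = H+1-h steps (stages h..H) remain.\<close>
primrec Qpi_aux :: "('s::finite \<Rightarrow> 'act \<Rightarrow> 's \<Rightarrow> real) \<Rightarrow> ('s \<Rightarrow> 'act \<Rightarrow> real) \<Rightarrow> (nat \<Rightarrow> 's \<Rightarrow> 'act)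
     \<Rightarrow> nat \<Rightarrow> nat \<Rightarrow> 's \<Rightarrow> 'act \<Rightarrow> real" where
  "Qpi_aux P r \<pi> h 0 s a = 0"
| "Qpi_aux P r \<pi> h (Suc n) s a =
     r s a + (\<Sum>s'\<in>UNIV. P s a s' * Qpi_aux P r \<pi> (Suc h) n s' (\<pi> (Suc h) s'))"

definition Qpi :: "('s::finite \<Rightarrow> 'act \<Rightarrow> 's \<Rightarrow> real) \<Rightarrow> ('s \<Rightarrow> 'act \<Rightarrow> real) \<Rightarrow> nat \<Rightarrow> (nat \<Rightarrow> 's \<Rightarrow> 'act)
     \<Rightarrow> nat \<Rightarrow> 's \<Rightarrow> 'act \<Rightarrow> real" where
  "Qpi P r H \<pi> h s a = Qpi_aux P r \<pi> h (H + 1 - h) s a"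

definition Vpi :: "('s::finite \<Rightarrow> 'act \<Rightarrow> 's \<Rightarrow> real) \<Rightarrow> ('s \<Rightarrow> 'act \<Rightarrow> real) \<Rightarrow> nat \<Rightarrow> (nat \<Rightarrow> 's \<Rightarrow> 'act)
     \<Rightarrow> nat \<Rightarrow> 's \<Rightarrow> real" where
  "Vpi P r H \<pi> h s = Qpi P r H \<pi> h s (\<pi> h s)"

definition ellipsoid :: "real^'d \<Rightarrow> real^'d^'d \<Rightarrow> real \<Rightarrow> (real^'d) set" where
  "ellipsoid c A \<beta> = {\<theta>. (\<theta> - c) \<bullet> (A *v (\<theta> - c)) \<le> \<beta>}"

definition pos_def_matrix :: "real^'d^'d \<Rightarrow> bool" where
  "pos_def_matrix A \<longleftrightarrow> transpose A = A \<and> (\<forall>x. x \<noteq> 0 \<longrightarrow> x \<bullet> (A *v x) > 0)"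

definition Qopt_step :: "('s::finite \<Rightarrow> 'act \<Rightarrow> real) \<Rightarrow> ('s \<Rightarrow> 'act \<Rightarrow> 's \<Rightarrow> real^'d::finite) \<Rightarrow> (real^'d) set
     \<Rightarrow> ('s \<Rightarrow> real) \<Rightarrow> 's \<Rightarrow> 'act \<Rightarrow> real" where
  "Qopt_step r \<phi> \<Theta> V s a =
     r s a + (SUP \<theta>\<in>\<Theta>. (\<Sum>j\<in>UNIV. \<theta> $ j * (\<Sum>s'\<in>UNIV. (\<phi> s a s') $ j * V s')))"

text \<open>Vhat_aux ... n s is the optimistic value with n stages remaining (Vhat_{k,h} with n = H+1-h).\<close>
primrec Vhat_aux :: "('s::finite \<Rightarrow> 'act::finite \<Rightarrow> real) \<Rightarrow> ('s \<Rightarrow> 'act \<Rightarrow> 's \<Rightarrow> real^'d::finite)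
     \<Rightarrow> (real^'d) set \<Rightarrow> nat \<Rightarrow> 's \<Rightarrow> real" where
  "Vhat_aux r \<phi> \<Theta> 0 s = 0"
| "Vhat_aux r \<phi> \<Theta> (Suc n) s = Max (range (\<lambda>a. Qopt_step r \<phi> \<Theta> (Vhat_aux r \<phi> \<Theta> n) s a))"

definition Qhat :: "('s::finite \<Rightarrow> 'act::finite \<Rightarrow> real) \<Rightarrow> ('s \<Rightarrow> 'act \<Rightarrow> 's \<Rightarrow> real^'d::finite)
     \<Rightarrow> nat \<Rightarrow> (real^'d) set \<Rightarrow> nat \<Rightarrow> 's \<Rightarrow> 'act \<Rightarrow> real" where
  "Qhat r \<phi> H \<Theta> h s a = (if h \<le> H then Qopt_step r \<phi> \<Theta> (Vhat_aux r \<phi> \<Theta> (H - h)) s a else 0)"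

definition Vhat :: "('s::finite \<Rightarrow> 'act::finite \<Rightarrow> real) \<Rightarrow> ('s \<Rightarrow> 'act \<Rightarrow> 's \<Rightarrow> real^'d::finite)
     \<Rightarrow> nat \<Rightarrow> (real^'d) set \<Rightarrow> nat \<Rightarrow> 's \<Rightarrow> real" where
  "Vhat r \<phi> H \<Theta> h s = Vhat_aux r \<phi> \<Theta> (H + 1 - h) s"

end

theory Submission
  imports Defs
begin

text \<open>Optimism by backward induction. Because \<theta>* lies in the confidence set \<Theta>, the optimistic
  backup of any value function V dominates the true backup r + P V at \<theta>*; since P \<ge> 0 the true
  backup is monotone in V, so the bound Q^\<pi> \<le> Qhat propagates from stage H+1 down to stage 1.
  This works for every policy \<pi>. Positive definiteness enters only to make the ellipsoids bounded: on reals
  SUP over a set that is not bounded above is a junk value, not an upper bound.\<close>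

lemma quadratic_form_scaleR:
  fixes A :: "real^'n^'n"
  shows "(c *\<^sub>R x) \<bullet> (A *v (c *\<^sub>R x)) = c\<^sup>2 * (x \<bullet> (A *v x))"
  by (simp add: matrix_vector_mult_scaleR power2_eq_square)

lemma pos_def_matrix_coercive:
  fixes A :: "real^'n^'n"
  assumes "pos_def_matrix A"
  obtains m where "m > 0" "\<And>x. m * (norm x)\<^sup>2 \<le> x \<bullet> (A *v x)"
proof -
  let ?q = "\<lambda>x::real^'n. x \<bullet> (A *v x)"
  have "continuous_on (sphere 0 1) ?q"
    by (intro continuous_intros linear_continuous_on bounded_linear_intros) auto
  moreover have "axis undefined 1 \<in> sphere (0::real^'n) 1"
    by simp
  ultimately obtain u where u: "u \<in> sphere 0 1" and u_min: "\<And>y. y \<in> sphere 0 1 \<Longrightarrow> ?q u \<le> ?q y"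
    using continuous_attains_inf[OF compact_sphere] by blast
  have "u \<noteq> 0"
    using u by auto
  then have "?q u > 0"
    using assms unfolding pos_def_matrix_def by blast
  moreover have "?q u * (norm x)\<^sup>2 \<le> ?q x" for x
  proof (cases "x = 0")
    case False
    have "?q x = (norm x)\<^sup>2 * ?q (x /\<^sub>R norm x)"
      using quadratic_form_scaleR[of "norm x" "x /\<^sub>R norm x" A] False by simp
    moreover have "?q u \<le> ?q (x /\<^sub>R norm x)"
      using False by (intro u_min) simp
    ultimately show ?thesis
      by (metis mult.commute mult_left_mono zero_le_power2)
  qed simp
  ultimately show ?thesis
    using that by blast
qed

lemma bounded_ellipsoid:
  assumes "pos_def_matrix A"
  shows "bounded (ellipsoid c A \<beta>)"
proof -
  obtain m where m: "m > 0" "\<And>x. m * (norm x)\<^sup>2 \<le> x \<bullet> (A *v x)"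
    using pos_def_matrix_coercive[OF assms] by blast
  have "ellipsoid c A \<beta> \<subseteq> cball c (sqrt (\<beta> / m))"
  proof
    fix \<theta> assume "\<theta> \<in> ellipsoid c A \<beta>"
    then have "m * (norm (\<theta> - c))\<^sup>2 \<le> \<beta>"
      using m(2)[of "\<theta> - c"] unfolding ellipsoid_def by simp
    then have "(norm (\<theta> - c))\<^sup>2 \<le> \<beta> / m"
      using m(1) by (simp add: field_simps)
    then show "\<theta> \<in> cball c (sqrt (\<beta> / m))"
      by (simp add: dist_norm norm_minus_commute real_le_rsqrt)
  qed
  then show ?thesis
    using bounded_cball bounded_subset by blast
qed

lemma sum_trans_prob_mult:
  "(\<Sum>s'\<in>UNIV. trans_prob \<theta> \<phi> s a s' * V s') = (\<Sum>j\<in>UNIV. \<theta> $ j * (\<Sum>s'\<in>UNIV. \<phi> s a s' $ j * V s'))"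
proof -
  have "(\<Sum>s'\<in>UNIV. trans_prob \<theta> \<phi> s a s' * V s') = (\<Sum>s'\<in>UNIV. \<Sum>j\<in>UNIV. \<theta> $ j * (\<phi> s a s' $ j * V s'))"
    unfolding trans_prob_def inner_vec_def by (simp add: sum_distrib_right mult.assoc)
  also have "\<dots> = (\<Sum>j\<in>UNIV. \<theta> $ j * (\<Sum>s'\<in>UNIV. \<phi> s a s' $ j * V s'))"
    by (subst sum.swap) (simp add: sum_distrib_left)
  finally show ?thesis .
qed

lemma bdd_above_linear_image:
  fixes \<Theta> :: "(real^'n) set"
  assumes "bounded \<Theta>"
  shows "bdd_above ((\<lambda>\<theta>. \<Sum>j\<in>UNIV. \<theta> $ j * w j) ` \<Theta>)"
proof -
  have "bounded_linear (\<lambda>\<theta>::real^'n. \<Sum>j\<in>UNIV. \<theta> $ j * w j)"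
    by (intro bounded_linear_intros bounded_linear_vec_nth)
  then show ?thesis
    by (intro bounded_imp_bdd_above bounded_linear_image assms)
qed

lemma Qopt_step_ge_backup:
  assumes "\<theta> \<in> \<Theta>" "bounded \<Theta>"
  shows "r s a + (\<Sum>s'\<in>UNIV. trans_prob \<theta> \<phi> s a s' * V s') \<le> Qopt_step r \<phi> \<Theta> V s a"
  unfolding Qopt_step_def sum_trans_prob_mult
  using cSUP_upper[OF assms(1) bdd_above_linear_image[OF assms(2)]] by simp

lemma Qpi_aux_Suc_le_Qopt_step:
  assumes P_nonneg: "\<And>s a s'. 0 \<le> trans_prob \<theta> \<phi> s a s'"
    and "\<theta> \<in> \<Theta>" "bounded \<Theta>"
    and le_V: "\<And>s'. Qpi_aux (trans_prob \<theta> \<phi>) r \<pi> (Suc h) n s' (\<pi> (Suc h) s') \<le> V s'"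
  shows "Qpi_aux (trans_prob \<theta> \<phi>) r \<pi> h (Suc n) s a \<le> Qopt_step r \<phi> \<Theta> V s a"
proof -
  have "Qpi_aux (trans_prob \<theta> \<phi>) r \<pi> h (Suc n) s a \<le> r s a + (\<Sum>s'\<in>UNIV. trans_prob \<theta> \<phi> s a s' * V s')"
    using le_V by (simp add: sum_mono mult_left_mono P_nonneg)
  also have "\<dots> \<le> Qopt_step r \<phi> \<Theta> V s a"
    using Qopt_step_ge_backup assms(2,3) .
  finally show ?thesis .
qed

lemma Qpi_aux_le_Vhat_aux:
  fixes r :: "'s::finite \<Rightarrow> 'act::finite \<Rightarrow> real"
  assumes "\<And>s a s'. 0 \<le> trans_prob \<theta> \<phi> s a s'" "\<theta> \<in> \<Theta>" "bounded \<Theta>"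
  shows "Qpi_aux (trans_prob \<theta> \<phi>) r \<pi> h n s a \<le> Vhat_aux r \<phi> \<Theta> n s"
proof (induction n arbitrary: h s a)
  case 0
  show ?case by simp
next
  case (Suc n)
  have "Qpi_aux (trans_prob \<theta> \<phi>) r \<pi> h (Suc n) s a \<le> Qopt_step r \<phi> \<Theta> (Vhat_aux r \<phi> \<Theta> n) s a"
    using Qpi_aux_Suc_le_Qopt_step[OF assms Suc.IH] .
  also have "\<dots> \<le> Vhat_aux r \<phi> \<Theta> (Suc n) s"
    by simp
  finally show ?case .
qed

lemma Qpi_le_Qhat:
  fixes r :: "'s::finite \<Rightarrow> 'act::finite \<Rightarrow> real"
  assumes "\<And>s a s'. 0 \<le> trans_prob \<theta> \<phi> s a s'" "\<theta> \<in> \<Theta>" "bounded \<Theta>"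
  shows "Qpi (trans_prob \<theta> \<phi>) r H \<pi> h s a \<le> Qhat r \<phi> H \<Theta> h s a"
proof (cases "h \<le> H")
  case True
  then have "H + 1 - h = Suc (H - h)"
    by simp
  then show ?thesis
    unfolding Qpi_def Qhat_def
    using True Qpi_aux_Suc_le_Qopt_step[OF assms Qpi_aux_le_Vhat_aux[OF assms]] by simp
qed (simp add: Qpi_def Qhat_def)

lemma Qpi_le_Vhat:
  fixes r :: "'s::finite \<Rightarrow> 'act::finite \<Rightarrow> real"
  assumes "\<And>s a s'. 0 \<le> trans_prob \<theta> \<phi> s a s'" "\<theta> \<in> \<Theta>" "bounded \<Theta>"
  shows "Qpi (trans_prob \<theta> \<phi>) r H \<pi> h s a \<le> Vhat r \<phi> H \<Theta> h s"
  unfolding Qpi_def Vhat_def using Qpi_aux_le_Vhat_aux[OF assms] .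

theorem lemmaC2:
  fixes r :: "'s::finite \<Rightarrow> 'act::finite \<Rightarrow> real"
    and \<phi> :: "'s \<Rightarrow> 'act \<Rightarrow> 's \<Rightarrow> real^'d::finite"
    and \<theta>star :: "real^'d"
    and H :: nat
    and \<pi>star :: "nat \<Rightarrow> 's \<Rightarrow> 'act"
    and cB cC :: "nat \<Rightarrow> real^'d"
    and AB AC :: "nat \<Rightarrow> real^'d^'d"
    and \<beta>B \<beta>C :: "nat \<Rightarrow> real"
  assumes r_range: "\<And>s a. 0 \<le> r s a \<and> r s a \<le> 1"
    and P_nonneg: "\<And>s a s'. 0 \<le> trans_prob \<theta>star \<phi> s a s'"
    and P_sum: "\<And>s a. (\<Sum>s'\<in>UNIV. trans_prob \<theta>star \<phi> s a s') = 1"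
    and opt: "\<And>\<pi> h s. 1 \<le> h \<Longrightarrow> h \<le> H + 1 \<Longrightarrow>
                Vpi (trans_prob \<theta>star \<phi>) r H \<pi> h s \<le> Vpi (trans_prob \<theta>star \<phi>) r H \<pi>star h s"
    and B_pd: "\<And>k. pos_def_matrix (AB k)"
    and C_pd: "\<And>k. pos_def_matrix (AC k)"
    and E0: "\<And>k. 1 \<le> k \<Longrightarrow>
               \<theta>star \<in> ellipsoid (cB k) (AB k) (\<beta>B k) \<inter> ellipsoid (cC k) (AC k) (\<beta>C k)"
  shows "\<forall>k\<ge>1. \<forall>h. 1 \<le> h \<and> h \<le> H + 1 \<longrightarrow> (\<forall>s a.
           Qpi (trans_prob \<theta>star \<phi>) r H \<pi>star h s a
             \<le> Qhat r \<phi> H (ellipsoid (cB k) (AB k) (\<beta>B k) \<inter> ellipsoid (cC k) (AC k) (\<beta>C k)) h s a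
         \<and> Max (range (\<lambda>a'. Qpi (trans_prob \<theta>star \<phi>) r H \<pi>star h s a'))
             \<le> Vhat r \<phi> H (ellipsoid (cB k) (AB k) (\<beta>B k) \<inter> ellipsoid (cC k) (AC k) (\<beta>C k)) h s)"
proof (intro allI impI conjI)
  fix k h s a assume "1 \<le> (k::nat)"
  let ?\<Theta> = "ellipsoid (cB k) (AB k) (\<beta>B k) \<inter> ellipsoid (cC k) (AC k) (\<beta>C k)"
  have \<theta>star_in: "\<theta>star \<in> ?\<Theta>"
    using E0 \<open>1 \<le> k\<close> by blast
  have bounded: "bounded ?\<Theta>"
    using bounded_ellipsoid[OF B_pd] bounded_Int by blast
  show "Qpi (trans_prob \<theta>star \<phi>) r H \<pi>star h s a \<le> Qhat r \<phi> H ?\<Theta> h s a"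
    using Qpi_le_Qhat[OF P_nonneg \<theta>star_in bounded] .
  show "Max (range (\<lambda>a'. Qpi (trans_prob \<theta>star \<phi>) r H \<pi>star h s a')) \<le> Vhat r \<phi> H ?\<Theta> h s"
    using Qpi_le_Vhat[OF P_nonneg \<theta>star_in bounded] by (simp add: Max_le_iff)
qed

end
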